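(* Let $G$ be a countable group with a right-invariant metric $d$ whose integer balls $B_k=\{g:d(g,e)\le k\}$ are finite, having the Besicovitch covering property with constant $C$, and such that $(B_k)$ has the multiplicative doubling property with constant $D$. Let $G$ act non-singularly on a probability space $(X,\mu)$. Then for every $f\in L^1(\mu)$ and $\epsilon>0$, $$\mu\Big(\sup_{k\ge1}\Big|\frac{\sum_{g\in B_k}\hat gf}{\sum_{g\in B_k}\hat g1}\Big|>\epsilon\Big)\le\frac{CD}{\epsilon}\|f\|_1.$$
   Context: $\omega_g=\frac{d(\mu\circ g)}{d\mu}$, $\hat gf(x)=f(gx)\omega_g(x)$. Besicovitch covering property with constant $C$: for every finite $E$ and collection $\mathcal{U}=\{B_{r(x)}(x):x\in E\}$ of closed balls centred in $E$ there is $\mathcal{V}\subseteq\mathcal{U}$ with $\mathbf{1}_E\le\sum_{U\in\mathcal{V}}\mathbf{1}_U\le C$. Multiplicative doubling with constant $D$: there is $K$ with $|B_kB_k|\le D|B_k|$ for all $k\ge K$. *)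

theory Defs
  imports "HOL-Probability.Probability" "HOL-Algebra.Group_Action"
begin

definition int_ball :: "('g, 'b) monoid_scheme \<Rightarrow> ('g \<Rightarrow> 'g \<Rightarrow> real) \<Rightarrow> nat \<Rightarrow> 'g set" where
  "int_ball G d k = {g \<in> carrier G. d g \<one>\<^bsub>G\<^esub> \<le> real k}"

definition right_invariant_metric :: "('g, 'b) monoid_scheme \<Rightarrow> ('g \<Rightarrow> 'g \<Rightarrow> real) \<Rightarrow> bool" where
  "right_invariant_metric G d \<longleftrightarrow> Metric_space (carrier G) d \<and>
     (\<forall>x\<in>carrier G. \<forall>y\<in>carrier G. \<forall>g\<in>carrier G. d (x \<otimes>\<^bsub>G\<^esub> g) (y \<otimes>\<^bsub>G\<^esub> g) = d x y)"

definition cball_G :: "('g, 'b) monoid_scheme \<Rightarrow> ('g \<Rightarrow> 'g \<Rightarrow> real) \<Rightarrow> 'g \<Rightarrow> real \<Rightarrow> 'g set" where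
  "cball_G G d x r = {y \<in> carrier G. d y x \<le> r}"

definition besicovitch :: "('g, 'b) monoid_scheme \<Rightarrow> ('g \<Rightarrow> 'g \<Rightarrow> real) \<Rightarrow> real \<Rightarrow> bool" where
  "besicovitch G d C \<longleftrightarrow>
     (\<forall>E r. finite E \<longrightarrow> E \<subseteq> carrier G \<longrightarrow> (\<forall>x\<in>E. r x > 0) \<longrightarrow>
        (\<exists>V \<subseteq> (\<lambda>x. cball_G G d x (r x)) ` E.
           \<forall>y\<in>carrier G. indicator E y \<le> (\<Sum>U\<in>V. indicator U y :: real)
                          \<and> (\<Sum>U\<in>V. indicator U y :: real) \<le> C))"

definition mult_doubling :: "('g, 'b) monoid_scheme \<Rightarrow> ('g \<Rightarrow> 'g \<Rightarrow> real) \<Rightarrow> real \<Rightarrow> bool" where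
  "mult_doubling G d D \<longleftrightarrow>
     (\<exists>K. \<forall>k\<ge>K. real (card (int_ball G d k <#>\<^bsub>G\<^esub> int_ball G d k)) \<le> D * real (card (int_ball G d k)))"

definition nonsingular_action :: "('g, 'b) monoid_scheme \<Rightarrow> 'x measure \<Rightarrow> ('g \<Rightarrow> 'x \<Rightarrow> 'x) \<Rightarrow> bool" where
  "nonsingular_action G M T \<longleftrightarrow> group_action G (space M) T \<and>
     (\<forall>g\<in>carrier G. T g \<in> M \<rightarrow>\<^sub>M M \<and>
        (\<forall>A\<in>sets M. emeasure M (T g -` A \<inter> space M) = 0 \<longleftrightarrow> emeasure M A = 0))"

text \<open>omega_g = d(mu o g)/d mu, where (mu o g)(A) = mu(gA) = distr M M (T g^-1) A.\<close>
definition omega :: "('g, 'b) monoid_scheme \<Rightarrow> 'x measure \<Rightarrow> ('g \<Rightarrow> 'x \<Rightarrow> 'x) \<Rightarrow> 'g \<Rightarrow> 'x \<Rightarrow> real" where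
  "omega G M T g = (\<lambda>x. enn2real (RN_deriv M (distr M M (T (inv\<^bsub>G\<^esub> g))) x))"

definition hat_op :: "('g, 'b) monoid_scheme \<Rightarrow> 'x measure \<Rightarrow> ('g \<Rightarrow> 'x \<Rightarrow> 'x) \<Rightarrow> 'g \<Rightarrow> ('x \<Rightarrow> real) \<Rightarrow> 'x \<Rightarrow> real" where
  "hat_op G M T g f = (\<lambda>x. f (T g x) * omega G M T g x)"

end

theory Submission
  imports Defs
begin

text \<open>Transference. Since \<open>\<omega>\<close> is a cocycle, \<open>\<omega>\<^sub>g\<^sub>h(x) = \<omega>\<^sub>g(hx) \<omega>\<^sub>h(x)\<close>, the averages along the orbit
  of a point \<open>x\<close> are averages over right translates \<open>B\<^sub>k h\<close> of balls, weighted by \<open>y \<mapsto> \<omega>\<^sub>y(x)\<close>.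
  For a fixed truncation level \<open>L \<le> N\<close> the Besicovitch property bounds the weighted number of points
  \<open>h \<in> B\<^sub>N\<close> with \<open>hx\<close> in the level set by \<open>C/\<epsilon>\<close> times the weighted \<open>|f|\<close>-mass on \<open>B\<^sub>N B\<^sub>N\<close>.
  Integrating over \<open>x\<close>, each translate contributes the same amount (\<open>\<omega>\<^sub>h\<close> is the Radon-Nikodym
  derivative of \<open>\<mu> \<circ> h\<close>), so \<open>\<epsilon> |B\<^sub>N| \<mu>(level set) \<le> C |B\<^sub>N B\<^sub>N| \<parallel>f\<parallel>\<^sub>1 \<le> C D |B\<^sub>N| \<parallel>f\<parallel>\<^sub>1\<close> by doubling;
  letting \<open>L \<rightarrow> \<infinity>\<close> gives the theorem.\<close>

locale nonsingular_prob_action =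
  fixes G :: "('g, 'b) monoid_scheme" and M :: "'x measure" and T :: "'g \<Rightarrow> 'x \<Rightarrow> 'x"
  assumes prob: "prob_space M" and nonsingular: "nonsingular_action G M T"
begin

interpretation prob_space M by (rule prob)

lemma group_action: "group_action G (space M) T"
  using nonsingular unfolding nonsingular_action_def by blast

lemma action_group: "group G"
  using group_action unfolding group_action_def group_hom_def by blast

lemma measurable_action: "g \<in> carrier G \<Longrightarrow> T g \<in> M \<rightarrow>\<^sub>M M"
  using nonsingular unfolding nonsingular_action_def by blast

lemma action_mult:
  "x \<in> space M \<Longrightarrow> g \<in> carrier G \<Longrightarrow> h \<in> carrier G \<Longrightarrow> T (g \<otimes>\<^bsub>G\<^esub> h) x = T g (T h x)"
  using group_action.composition_rule[OF group_action] by blast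

lemma action_inv_cancel: "x \<in> space M \<Longrightarrow> g \<in> carrier G \<Longrightarrow> T g (T (inv\<^bsub>G\<^esub> g) x) = x"
  using group_action.id_eq_one[OF group_action]
  by (metis action_mult action_group group.inv_closed group.r_inv restrict_apply')

definition shifted_measure :: "'g \<Rightarrow> 'x measure" where
  "shifted_measure g = distr M M (T (inv\<^bsub>G\<^esub> g))"

lemma sets_shifted_measure [simp]: "sets (shifted_measure g) = sets M"
  by (simp add: shifted_measure_def)

lemma absolutely_continuous_shifted_measure:
  assumes g: "g \<in> carrier G"
  shows "absolutely_continuous M (shifted_measure g)"
  unfolding absolutely_continuous_def
proof
  have ig: "inv\<^bsub>G\<^esub> g \<in> carrier G" using g by (simp add: action_group group.inv_closed)
  fix A assume A: "A \<in> null_sets M"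
  hence "emeasure M (T (inv\<^bsub>G\<^esub> g) -` A \<inter> space M) = 0"
    using nonsingular ig unfolding nonsingular_action_def by auto
  thus "A \<in> null_sets (shifted_measure g)" using A measurable_action[OF ig]
    by (simp add: shifted_measure_def null_sets_def emeasure_distr)
qed

lemma sigma_finite_shifted_measure:
  "g \<in> carrier G \<Longrightarrow> sigma_finite_measure (shifted_measure g)"
  unfolding shifted_measure_def
  by (intro prob_space_imp_sigma_finite prob_space_distr measurable_action)
     (simp add: action_group group.inv_closed)

lemma omega_borel_measurable [measurable]: "omega G M T g \<in> borel_measurable M"
  unfolding omega_def by measurable

lemma omega_nonneg: "0 \<le> omega G M T g x"
  by (simp add: omega_def)

lemma density_omega:
  assumes g: "g \<in> carrier G"
  shows "density M (\<lambda>x. ennreal (omega G M T g x)) = shifted_measure g"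
proof -
  have "AE x in M. RN_deriv M (shifted_measure g) x \<noteq> \<infinity>"
    using RN_deriv_finite sigma_finite_shifted_measure absolutely_continuous_shifted_measure g
    by simp
  hence "AE x in M. ennreal (omega G M T g x) = RN_deriv M (shifted_measure g) x"
    by eventually_elim (auto simp: omega_def shifted_measure_def less_top)
  hence "density M (\<lambda>x. ennreal (omega G M T g x)) = density M (RN_deriv M (shifted_measure g))"
    by (rule density_cong[rotated 2]) auto
  also have "\<dots> = shifted_measure g"
    by (rule density_RN_deriv[OF absolutely_continuous_shifted_measure[OF g] sets_shifted_measure])
  finally show ?thesis .
qed

lemma nn_integral_omega:
  assumes g: "g \<in> carrier G" and \<psi>: "\<psi> \<in> borel_measurable M"
  shows "(\<integral>\<^sup>+y. \<psi> y * ennreal (omega G M T g y) \<partial>M) = (\<integral>\<^sup>+z. \<psi> (T (inv\<^bsub>G\<^esub> g) z) \<partial>M)"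
proof -
  have ig: "inv\<^bsub>G\<^esub> g \<in> carrier G" using g by (simp add: action_group group.inv_closed)
  have "(\<integral>\<^sup>+y. \<psi> y * ennreal (omega G M T g y) \<partial>M) = (\<integral>\<^sup>+y. \<psi> y \<partial>density M (\<lambda>x. ennreal (omega G M T g x)))"
    using \<psi> by (simp add: nn_integral_density mult.commute)
  also have "\<dots> = (\<integral>\<^sup>+z. \<psi> (T (inv\<^bsub>G\<^esub> g) z) \<partial>M)"
    unfolding density_omega[OF g] shifted_measure_def
    using \<psi> measurable_action[OF ig] by (simp add: nn_integral_distr)
  finally show ?thesis .
qed

lemma nn_integral_omega_transfer:
  assumes g: "g \<in> carrier G" and \<phi>[measurable]: "\<phi> \<in> borel_measurable M"
  shows "(\<integral>\<^sup>+x. \<phi> (T g x) * ennreal (omega G M T g x) \<partial>M) = (\<integral>\<^sup>+x. \<phi> x \<partial>M)"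
proof -
  note [measurable] = measurable_action[OF g]
  have "(\<integral>\<^sup>+x. \<phi> (T g x) * ennreal (omega G M T g x) \<partial>M) = (\<integral>\<^sup>+z. \<phi> (T g (T (inv\<^bsub>G\<^esub> g) z)) \<partial>M)"
    by (rule nn_integral_omega[OF g]) measurable
  also have "\<dots> = (\<integral>\<^sup>+z. \<phi> z \<partial>M)"
    by (rule nn_integral_cong) (simp add: action_inv_cancel g)
  finally show ?thesis .
qed

lemma density_omega_cocycle:
  assumes g: "g \<in> carrier G" and h: "h \<in> carrier G"
  shows "density M (\<lambda>x. ennreal (omega G M T g (T h x) * omega G M T h x)) = shifted_measure (g \<otimes>\<^bsub>G\<^esub> h)"
proof (rule measure_eqI)
  have ig: "inv\<^bsub>G\<^esub> g \<in> carrier G" and ih: "inv\<^bsub>G\<^esub> h \<in> carrier G"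
    and inv_gh: "inv\<^bsub>G\<^esub> (g \<otimes>\<^bsub>G\<^esub> h) = inv\<^bsub>G\<^esub> h \<otimes>\<^bsub>G\<^esub> inv\<^bsub>G\<^esub> g"
    using g h by (simp_all add: action_group group.inv_closed group.inv_mult_group)
  note [measurable] = measurable_action[OF h] measurable_action[OF ih] measurable_action[OF ig]
  have T_inv_gh: "T (inv\<^bsub>G\<^esub> (g \<otimes>\<^bsub>G\<^esub> h)) \<in> M \<rightarrow>\<^sub>M M"
    using g h by (simp add: measurable_action action_group group.inv_closed group.subgroup_self
        subgroup.m_closed)
  fix A assume "A \<in> sets (density M (\<lambda>x. ennreal (omega G M T g (T h x) * omega G M T h x)))"
  hence A[measurable]: "A \<in> sets M" by simp
  have "emeasure (density M (\<lambda>x. ennreal (omega G M T g (T h x) * omega G M T h x))) A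
      = (\<integral>\<^sup>+x. (indicator A x * ennreal (omega G M T g (T h x))) * ennreal (omega G M T h x) \<partial>M)"
    by (simp add: emeasure_density omega_nonneg ennreal_mult ac_simps)
  also have "\<dots> = (\<integral>\<^sup>+z. indicator A (T (inv\<^bsub>G\<^esub> h) z) * ennreal (omega G M T g z) \<partial>M)"
    by (subst nn_integral_omega[OF h], measurable)
       (intro nn_integral_cong, simp add: action_inv_cancel h)
  also have "\<dots> = (\<integral>\<^sup>+w. indicator A (T (inv\<^bsub>G\<^esub> (g \<otimes>\<^bsub>G\<^esub> h)) w) \<partial>M)"
    by (subst nn_integral_omega[OF g], measurable)
       (intro nn_integral_cong, simp add: inv_gh action_mult ih ig)
  also have "\<dots> = (\<integral>\<^sup>+w. indicator (T (inv\<^bsub>G\<^esub> (g \<otimes>\<^bsub>G\<^esub> h)) -` A \<inter> space M) w \<partial>M)"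
    by (intro nn_integral_cong) (simp add: indicator_def)
  also have "\<dots> = emeasure (shifted_measure (g \<otimes>\<^bsub>G\<^esub> h)) A"
    unfolding shifted_measure_def
    by (simp add: emeasure_distr[OF T_inv_gh A] nn_integral_indicator[OF measurable_sets[OF T_inv_gh A]])
  finally show "emeasure (density M (\<lambda>x. ennreal (omega G M T g (T h x) * omega G M T h x))) A
      = emeasure (shifted_measure (g \<otimes>\<^bsub>G\<^esub> h)) A" .
qed simp

lemma AE_omega_cocycle:
  assumes g: "g \<in> carrier G" and h: "h \<in> carrier G"
  shows "AE x in M. omega G M T (g \<otimes>\<^bsub>G\<^esub> h) x = omega G M T g (T h x) * omega G M T h x"
proof -
  have gh: "g \<otimes>\<^bsub>G\<^esub> h \<in> carrier G"
    using g h by (simp add: action_group group.subgroup_self subgroup.m_closed)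
  note [measurable] = measurable_action[OF h]
  have "AE x in M. ennreal (omega G M T g (T h x) * omega G M T h x) = RN_deriv M (shifted_measure (g \<otimes>\<^bsub>G\<^esub> h)) x"
    by (rule RN_deriv_unique[OF _ density_omega_cocycle[OF g h]]) measurable
  moreover have "AE x in M. ennreal (omega G M T (g \<otimes>\<^bsub>G\<^esub> h) x) = RN_deriv M (shifted_measure (g \<otimes>\<^bsub>G\<^esub> h)) x"
    by (rule RN_deriv_unique[OF _ density_omega[OF gh]]) measurable
  ultimately show ?thesis
    by eventually_elim (metis ennreal_inj mult_nonneg_nonneg omega_nonneg)
qed

lemma AE_omega_cocycle_all:
  assumes "countable (carrier G)"
  shows "AE x in M. \<forall>g\<in>carrier G. \<forall>h\<in>carrier G.
           omega G M T (g \<otimes>\<^bsub>G\<^esub> h) x = omega G M T g (T h x) * omega G M T h x"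
  using AE_omega_cocycle assms by (simp add: AE_ball_countable)

lemma nn_integral_sum_omega_transfer:
  assumes H: "finite H" "H \<subseteq> carrier G"
    and \<phi>: "integrable M \<phi>" and \<phi>_nonneg: "\<And>x. 0 \<le> \<phi> x"
  shows "(\<integral>\<^sup>+x. ennreal (\<Sum>h\<in>H. \<phi> (T h x) * omega G M T h x) \<partial>M)
       = ennreal (real (card H) * (\<integral>x. \<phi> x \<partial>M))"
proof -
  have [measurable]: "\<phi> \<in> borel_measurable M" using \<phi> by simp
  have [measurable]: "h \<in> H \<Longrightarrow> T h \<in> M \<rightarrow>\<^sub>M M" for h
    using H measurable_action by blast
  have "(\<integral>\<^sup>+x. ennreal (\<Sum>h\<in>H. \<phi> (T h x) * omega G M T h x) \<partial>M)
      = (\<integral>\<^sup>+x. (\<Sum>h\<in>H. ennreal (\<phi> (T h x)) * ennreal (omega G M T h x)) \<partial>M)"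
    by (intro nn_integral_cong) (simp add: \<phi>_nonneg omega_nonneg ennreal_mult flip: sum_ennreal)
  also have "\<dots> = (\<Sum>h\<in>H. \<integral>\<^sup>+x. ennreal (\<phi> (T h x)) * ennreal (omega G M T h x) \<partial>M)"
    by (rule nn_integral_sum) measurable
  also have "\<dots> = (\<Sum>h\<in>H. \<integral>\<^sup>+x. ennreal (\<phi> x) \<partial>M)"
    using H by (intro sum.cong refl nn_integral_omega_transfer) auto
  also have "\<dots> = (\<Sum>h\<in>H. ennreal (\<integral>x. \<phi> x \<partial>M))"
    using \<phi> \<phi>_nonneg by (simp add: nn_integral_eq_integral)
  finally show ?thesis
    using \<phi>_nonneg by (simp add: ennreal_mult ennreal_of_nat_eq_real_of_nat)
qed

end

locale right_invariant_metric_group =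
  fixes G :: "('g, 'b) monoid_scheme" (structure) and d :: "'g \<Rightarrow> 'g \<Rightarrow> real"
  assumes group: "group G" and right_invariant: "right_invariant_metric G d"
begin

interpretation group G by (rule group)

lemma dist_mult_inv_one:
  assumes y: "y \<in> carrier G" and h: "h \<in> carrier G"
  shows "d (y \<otimes> inv h) \<one> = d y h"
proof -
  have "d (y \<otimes> inv h \<otimes> h) (\<one> \<otimes> h) = d (y \<otimes> inv h) \<one>"
    using right_invariant y h unfolding right_invariant_metric_def by (meson inv_closed m_closed one_closed)
  thus ?thesis using y h by (simp add: m_assoc)
qed

lemma int_ball_subset_carrier: "int_ball G d k \<subseteq> carrier G"
  unfolding int_ball_def by auto

lemma one_in_int_ball: "\<one> \<in> int_ball G d k"
  using right_invariant Metric_space.zero[of "carrier G" d \<one> \<one>]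
  unfolding int_ball_def right_invariant_metric_def by simp

lemma int_ball_mono: "k \<le> N \<Longrightarrow> int_ball G d k \<subseteq> int_ball G d N"
  unfolding int_ball_def by auto

lemma image_mult_right_int_ball:
  assumes h: "h \<in> carrier G"
  shows "(\<lambda>g. g \<otimes> h) ` int_ball G d k = cball_G G d h (real k)"
proof (intro equalityI subsetI)
  fix y assume "y \<in> (\<lambda>g. g \<otimes> h) ` int_ball G d k"
  then obtain g where g: "g \<in> int_ball G d k" and y: "y = g \<otimes> h" by blast
  hence "g \<in> carrier G" by (simp add: int_ball_def)
  thus "y \<in> cball_G G d h (real k)"
    using g h dist_mult_inv_one[of "g \<otimes> h" h] unfolding y
    by (simp add: int_ball_def cball_G_def m_assoc)
next
  fix y assume y: "y \<in> cball_G G d h (real k)"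
  hence "y \<in> carrier G" by (simp add: cball_G_def)
  hence "y \<otimes> inv h \<in> int_ball G d k" and "y = y \<otimes> inv h \<otimes> h"
    using y h dist_mult_inv_one by (simp_all add: int_ball_def cball_G_def m_assoc)
  thus "y \<in> (\<lambda>g. g \<otimes> h) ` int_ball G d k" by blast
qed

lemma sum_int_ball_mult_right:
  assumes h: "h \<in> carrier G"
  shows "(\<Sum>g\<in>int_ball G d k. a (g \<otimes> h)) = (\<Sum>y\<in>cball_G G d h (real k). a y)"
proof -
  have "inj_on (\<lambda>g. g \<otimes> h) (int_ball G d k)"
    using h by (auto simp: inj_on_def int_ball_def)
  thus ?thesis
    using sum.reindex[of "\<lambda>g. g \<otimes> h" "int_ball G d k" a] image_mult_right_int_ball[OF h] by simp
qed

lemma cball_subset_set_mult_int_ball: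
  assumes h: "h \<in> int_ball G d N" and k: "k \<le> N"
  shows "cball_G G d h (real k) \<subseteq> int_ball G d N <#> int_ball G d N"
proof -
  have "cball_G G d h (real k) = (\<lambda>g. g \<otimes> h) ` int_ball G d k"
    using h int_ball_subset_carrier image_mult_right_int_ball by blast
  also have "\<dots> \<subseteq> int_ball G d N <#> int_ball G d N"
    using h int_ball_mono[OF k] unfolding set_mult_def by blast
  finally show ?thesis .
qed

lemma int_ball_subset_set_mult: "int_ball G d N \<subseteq> int_ball G d N <#> int_ball G d N"
  using one_in_int_ball int_ball_subset_carrier unfolding set_mult_def by force

end

lemma besicovitch_ge_one:
  assumes "besicovitch G d C" and "carrier G \<noteq> {}"
  shows "1 \<le> C"
proof -
  obtain y where y: "y \<in> carrier G" using assms(2) by blast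
  from assms(1)[unfolded besicovitch_def, rule_format, of "{y}" "\<lambda>_. 1"] y
  obtain V where "indicator {y} y \<le> (\<Sum>U\<in>V. indicator U y :: real)" "(\<Sum>U\<in>V. indicator U y :: real) \<le> C"
    by auto
  thus ?thesis by simp
qed

lemma sum_mult_sum_indicator:
  fixes a :: "'a \<Rightarrow> 'r::comm_semiring_1"
  assumes "finite S" and "\<And>U. U \<in> V \<Longrightarrow> U \<subseteq> S"
  shows "(\<Sum>y\<in>S. a y * (\<Sum>U\<in>V. indicator U y)) = (\<Sum>U\<in>V. sum a U)"
proof -
  have "(\<Sum>y\<in>S. a y * (\<Sum>U\<in>V. indicator U y)) = (\<Sum>U\<in>V. \<Sum>y\<in>S. a y * indicator U y)"
    by (simp add: sum_distrib_left sum.swap[of _ S])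
  also have "\<dots> = (\<Sum>U\<in>V. sum a U)"
  proof (rule sum.cong[OF refl])
    fix U assume "U \<in> V"
    hence "S \<inter> U = U" using assms(2) by blast
    thus "(\<Sum>y\<in>S. a y * indicator U y) = sum a U"
      (* qualified: Bochner_Integration shadows the name with a variant for indicators of families *)
      using Indicator_Function.sum_mult_indicator[OF assms(1), where f = a and B = U] by simp
  qed
  finally show ?thesis .
qed

text \<open>A subfamily of the balls covers \<open>E\<close> with multiplicity at most \<open>C\<close>; summing the local
  comparisons over this subfamily gives the global one.\<close>

lemma besicovitch_sum_le:
  fixes W F :: "'g \<Rightarrow> real"
  assumes besicovitch: "besicovitch G d C"
    and S: "finite S" "S \<subseteq> carrier G" and E: "E \<subseteq> S"
    and W_nonneg: "\<And>y. y \<in> S \<Longrightarrow> 0 \<le> W y" and F_nonneg: "\<And>y. y \<in> S \<Longrightarrow> 0 \<le> F y"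
    and local: "\<And>h. h \<in> E \<Longrightarrow> \<exists>r>0. cball_G G d h r \<subseteq> S \<and>
                  sum W (cball_G G d h r) \<le> sum F (cball_G G d h r)"
  shows "sum W E \<le> C * sum F S"
proof -
  obtain r where r: "\<And>h. h \<in> E \<Longrightarrow> r h > 0 \<and> cball_G G d h (r h) \<subseteq> S \<and>
                  sum W (cball_G G d h (r h)) \<le> sum F (cball_G G d h (r h))"
    using local by metis
  have finE: "finite E" using E S finite_subset by blast
  have EC: "E \<subseteq> carrier G" using E S by blast
  have "\<exists>V \<subseteq> (\<lambda>h. cball_G G d h (r h)) ` E. \<forall>y\<in>carrier G.
          indicator E y \<le> (\<Sum>U\<in>V. indicator U y :: real) \<and> (\<Sum>U\<in>V. indicator U y :: real) \<le> C"
    by (rule besicovitch[unfolded besicovitch_def, rule_format, OF finE EC]) (use r in simp)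
  then obtain V where V: "V \<subseteq> (\<lambda>h. cball_G G d h (r h)) ` E"
    and cover: "\<And>y. y \<in> carrier G \<Longrightarrow> indicator E y \<le> (\<Sum>U\<in>V. indicator U y :: real)"
    and overlap: "\<And>y. y \<in> carrier G \<Longrightarrow> (\<Sum>U\<in>V. indicator U y :: real) \<le> C"
    by auto
  have VS: "\<And>U. U \<in> V \<Longrightarrow> U \<subseteq> S" using V r by blast
  have "sum W E = (\<Sum>y\<in>S. W y * indicator E y)"
    using E Indicator_Function.sum_mult_indicator[OF S(1), where f = W and B = E] by (simp add: Int_absorb1)
  also have "\<dots> \<le> (\<Sum>y\<in>S. W y * (\<Sum>U\<in>V. indicator U y))"
    using cover W_nonneg S by (intro sum_mono mult_left_mono) auto
  also have "\<dots> = (\<Sum>U\<in>V. sum W U)"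
    by (rule sum_mult_sum_indicator[OF S(1) VS])
  also have "\<dots> \<le> (\<Sum>U\<in>V. sum F U)"
    using V r by (intro sum_mono[of V]) auto
  also have "\<dots> = (\<Sum>y\<in>S. F y * (\<Sum>U\<in>V. indicator U y))"
    by (rule sum_mult_sum_indicator[OF S(1) VS, symmetric])
  also have "\<dots> \<le> (\<Sum>y\<in>S. F y * C)"
    using overlap F_nonneg S by (intro sum_mono mult_left_mono) auto
  finally show ?thesis by (simp add: sum_distrib_left mult.commute)
qed

definition ball_average ::
    "('g, 'b) monoid_scheme \<Rightarrow> ('g \<Rightarrow> 'g \<Rightarrow> real) \<Rightarrow> 'x measure \<Rightarrow> ('g \<Rightarrow> 'x \<Rightarrow> 'x)
       \<Rightarrow> nat \<Rightarrow> ('x \<Rightarrow> real) \<Rightarrow> 'x \<Rightarrow> real" where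
  "ball_average G d M T k f x =
     (\<Sum>g\<in>int_ball G d k. hat_op G M T g f x) / (\<Sum>g\<in>int_ball G d k. hat_op G M T g (\<lambda>_. 1) x)"

locale maximal_inequality_setting =
  right_invariant_metric_group G d + nonsingular_prob_action G M T
  for G :: "('g, 'b) monoid_scheme" (structure) and d and M :: "'x measure" and T +
  fixes C D :: real
  assumes countable_carrier: "countable (carrier G)"
    and finite_int_ball: "\<And>k. finite (int_ball G d k)"
    and besicovitch: "besicovitch G d C"
    and doubling: "mult_doubling G d D"
begin

interpretation group G by (rule group)

definition maximal_level_set :: "nat \<Rightarrow> real \<Rightarrow> ('x \<Rightarrow> real) \<Rightarrow> 'x set" where
  "maximal_level_set L \<epsilon> f = {x \<in> space M. \<exists>k\<in>{1..L}. \<epsilon> < \<bar>ball_average G d M T k f x\<bar>}"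

lemma ball_average_borel_measurable [measurable]:
  assumes [measurable]: "f \<in> borel_measurable M"
  shows "ball_average G d M T k f \<in> borel_measurable M"
proof -
  have [measurable]: "g \<in> int_ball G d k \<Longrightarrow> T g \<in> M \<rightarrow>\<^sub>M M" for g
    using measurable_action int_ball_subset_carrier by blast
  show ?thesis
    unfolding ball_average_def hat_op_def by measurable
qed

lemma maximal_level_set_sets [measurable]:
  "f \<in> borel_measurable M \<Longrightarrow> maximal_level_set L \<epsilon> f \<in> sets M"
  unfolding maximal_level_set_def by measurable

lemma ball_sum_shift:
  assumes x: "x \<in> space M" and h: "h \<in> carrier G"
    and cocycle: "\<And>g. g \<in> carrier G \<Longrightarrow> omega G M T (g \<otimes> h) x = omega G M T g (T h x) * omega G M T h x"
  shows "(\<Sum>g\<in>int_ball G d k. \<phi> (T g (T h x)) * omega G M T g (T h x)) * omega G M T h x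
       = (\<Sum>y\<in>cball_G G d h (real k). \<phi> (T y x) * omega G M T y x)"
proof -
  have "(\<Sum>g\<in>int_ball G d k. \<phi> (T g (T h x)) * omega G M T g (T h x)) * omega G M T h x
      = (\<Sum>g\<in>int_ball G d k. \<phi> (T (g \<otimes> h) x) * omega G M T (g \<otimes> h) x)"
    unfolding sum_distrib_right
  proof (intro sum.cong refl)
    fix g assume "g \<in> int_ball G d k"
    hence g: "g \<in> carrier G" using int_ball_subset_carrier by blast
    show "\<phi> (T g (T h x)) * omega G M T g (T h x) * omega G M T h x
        = \<phi> (T (g \<otimes> h) x) * omega G M T (g \<otimes> h) x"
      by (simp add: cocycle[OF g] action_mult[OF x g h])
  qed
  also have "\<dots> = (\<Sum>y\<in>cball_G G d h (real k). \<phi> (T y x) * omega G M T y x)"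
    by (rule sum_int_ball_mult_right[OF h])
  finally show ?thesis .
qed

lemma ball_average_local_bound:
  assumes x: "x \<in> space M" and h: "h \<in> carrier G"
    and cocycle: "\<And>g. g \<in> carrier G \<Longrightarrow> omega G M T (g \<otimes> h) x = omega G M T g (T h x) * omega G M T h x"
    and large: "\<epsilon> < \<bar>ball_average G d M T k f (T h x)\<bar>"
  shows "\<epsilon> * (\<Sum>y\<in>cball_G G d h (real k). omega G M T y x)
       \<le> (\<Sum>y\<in>cball_G G d h (real k). \<bar>f (T y x)\<bar> * omega G M T y x)"
proof -
  define num where "num = (\<Sum>g\<in>int_ball G d k. f (T g (T h x)) * omega G M T g (T h x))"
  define den where "den = (\<Sum>g\<in>int_ball G d k. omega G M T g (T h x))"
  have num_shift: "num * omega G M T h x = (\<Sum>y\<in>cball_G G d h (real k). f (T y x) * omega G M T y x)"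
    unfolding num_def by (rule ball_sum_shift[OF x h cocycle])
  have den_shift: "den * omega G M T h x = (\<Sum>y\<in>cball_G G d h (real k). omega G M T y x)"
    using ball_sum_shift[OF x h cocycle, where \<phi> = "\<lambda>_. 1"] by (simp add: den_def)
  have "\<epsilon> * den \<le> \<bar>num\<bar>"
  proof (cases "den = 0")
    case False
    hence "0 < den" using omega_nonneg by (simp add: den_def order_le_neq_trans sum_nonneg)
    moreover have "\<epsilon> < \<bar>num\<bar> / den"
      using large \<open>0 < den\<close> by (simp add: ball_average_def hat_op_def num_def den_def abs_div)
    ultimately show ?thesis by (simp add: pos_less_divide_eq less_imp_le mult.commute)
  qed simp
  hence "\<epsilon> * den * omega G M T h x \<le> \<bar>num\<bar> * omega G M T h x"
    by (rule mult_right_mono) (rule omega_nonneg)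
  also have "\<dots> = \<bar>\<Sum>y\<in>cball_G G d h (real k). f (T y x) * omega G M T y x\<bar>"
    by (simp add: abs_mult omega_nonneg flip: num_shift)
  also have "\<dots> \<le> (\<Sum>y\<in>cball_G G d h (real k). \<bar>f (T y x)\<bar> * omega G M T y x)"
    using sum_abs[of "\<lambda>y. f (T y x) * omega G M T y x"] by (simp add: abs_mult omega_nonneg)
  finally show ?thesis by (simp add: mult.assoc den_shift)
qed

lemma finite_set_mult_int_ball: "finite (int_ball G d N <#> int_ball G d N)"
  unfolding set_mult_def using finite_int_ball by simp

lemma pointwise_maximal_bound:
  assumes x: "x \<in> space M"
    and cocycle: "\<And>g h. g \<in> carrier G \<Longrightarrow> h \<in> carrier G \<Longrightarrow>
                   omega G M T (g \<otimes> h) x = omega G M T g (T h x) * omega G M T h x"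
    and LN: "L \<le> N" and \<epsilon>: "0 \<le> \<epsilon>"
  shows "\<epsilon> * (\<Sum>h\<in>int_ball G d N. indicator (maximal_level_set L \<epsilon> f) (T h x) * omega G M T h x)
       \<le> C * (\<Sum>y\<in>int_ball G d N <#> int_ball G d N. \<bar>f (T y x)\<bar> * omega G M T y x)"
proof -
  define E where "E = {h \<in> int_ball G d N. T h x \<in> maximal_level_set L \<epsilon> f}"
  have "\<epsilon> * (\<Sum>h\<in>int_ball G d N. indicator (maximal_level_set L \<epsilon> f) (T h x) * omega G M T h x)
      = (\<Sum>h\<in>E. \<epsilon> * omega G M T h x)"
    unfolding E_def sum_distrib_left sum.inter_filter[OF finite_int_ball]
    by (intro sum.cong refl) (simp add: indicator_def)
  also have "\<dots> \<le> C * (\<Sum>y\<in>int_ball G d N <#> int_ball G d N. \<bar>f (T y x)\<bar> * omega G M T y x)"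
  proof (rule besicovitch_sum_le[OF besicovitch finite_set_mult_int_ball])
    show "int_ball G d N <#> int_ball G d N \<subseteq> carrier G"
      by (intro set_mult_closed int_ball_subset_carrier)
    show "E \<subseteq> int_ball G d N <#> int_ball G d N"
      using int_ball_subset_set_mult by (auto simp: E_def)
    show "0 \<le> \<epsilon> * omega G M T y x" "0 \<le> \<bar>f (T y x)\<bar> * omega G M T y x" for y
      using \<epsilon> omega_nonneg by simp_all
    fix h assume "h \<in> E"
    then obtain k where k: "k \<in> {1..L}" and large: "\<epsilon> < \<bar>ball_average G d M T k f (T h x)\<bar>"
      and hB: "h \<in> int_ball G d N"
      by (auto simp: E_def maximal_level_set_def)
    have h: "h \<in> carrier G" using hB int_ball_subset_carrier by blast
    have "(\<Sum>y\<in>cball_G G d h (real k). \<epsilon> * omega G M T y x)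
        \<le> (\<Sum>y\<in>cball_G G d h (real k). \<bar>f (T y x)\<bar> * omega G M T y x)"
      using ball_average_local_bound[OF x h cocycle[OF _ h] large] by (simp add: sum_distrib_left)
    moreover have "cball_G G d h (real k) \<subseteq> int_ball G d N <#> int_ball G d N"
      using cball_subset_set_mult_int_ball[OF hB] k LN by simp
    ultimately show "\<exists>r>0. cball_G G d h r \<subseteq> int_ball G d N <#> int_ball G d N \<and>
        (\<Sum>y\<in>cball_G G d h r. \<epsilon> * omega G M T y x)
        \<le> (\<Sum>y\<in>cball_G G d h r. \<bar>f (T y x)\<bar> * omega G M T y x)"
      using k by (intro exI[of _ "real k"]) auto
  qed
  finally show ?thesis .
qed

lemma besicovitch_nonneg: "0 \<le> C"
proof -
  have "carrier G \<noteq> {}" using one_closed by blast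
  thus ?thesis using besicovitch_ge_one[OF besicovitch] by simp
qed

lemma integrated_maximal_bound:
  assumes f: "integrable M f" and \<epsilon>: "0 \<le> \<epsilon>" and LN: "L \<le> N"
  shows "real (card (int_ball G d N)) * (\<epsilon> * measure M (maximal_level_set L \<epsilon> f))
       \<le> real (card (int_ball G d N <#> int_ball G d N)) * (C * (\<integral>x. \<bar>f x\<bar> \<partial>M))"
proof -
  interpret prob_space M by (rule prob)
  have [measurable]: "f \<in> borel_measurable M" using f by simp
  define A where "A = maximal_level_set L \<epsilon> f"
  define B where "B = int_ball G d N"
  define S where "S = B <#> B"
  have B: "finite B" "B \<subseteq> carrier G" and S: "finite S" "S \<subseteq> carrier G"
    using finite_int_ball int_ball_subset_carrier finite_set_mult_int_ball set_mult_closed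
    by (simp_all add: B_def S_def)
  have [measurable]: "A \<in> sets M" by (simp add: A_def)
  have A_integrable: "integrable M (indicator A :: 'x \<Rightarrow> real)"
    by (simp add: less_top[symmetric])
  have "AE x in M. ennreal (\<Sum>h\<in>B. (\<epsilon> * indicator A (T h x)) * omega G M T h x)
                   \<le> ennreal (\<Sum>y\<in>S. (C * \<bar>f (T y x)\<bar>) * omega G M T y x)"
    using AE_omega_cocycle_all[OF countable_carrier] AE_space
  proof eventually_elim
    case (elim x)
    thus ?case
      using pointwise_maximal_bound[OF _ _ LN \<epsilon>, of x f]
      by (intro ennreal_leI) (simp add: A_def B_def S_def sum_distrib_left mult.assoc)
  qed
  hence "(\<integral>\<^sup>+x. ennreal (\<Sum>h\<in>B. (\<epsilon> * indicator A (T h x)) * omega G M T h x) \<partial>M)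
       \<le> (\<integral>\<^sup>+x. ennreal (\<Sum>y\<in>S. (C * \<bar>f (T y x)\<bar>) * omega G M T y x) \<partial>M)"
    by (rule nn_integral_mono_AE)
  also have "\<dots> = ennreal (real (card S) * (C * (\<integral>x. \<bar>f x\<bar> \<partial>M)))"
    using f besicovitch_nonneg by (subst nn_integral_sum_omega_transfer[OF S]) auto
  finally show ?thesis
    using \<epsilon> besicovitch_nonneg A_integrable
    by (subst (asm) nn_integral_sum_omega_transfer[OF B])
       (auto simp: ennreal_le_iff measure_nonneg A_def B_def S_def)
qed

lemma measure_maximal_level_set_le:
  assumes f: "integrable M f" and \<epsilon>: "0 < \<epsilon>"
  shows "measure M (maximal_level_set L \<epsilon> f) \<le> C * D / \<epsilon> * (\<integral>x. \<bar>f x\<bar> \<partial>M)"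
proof -
  obtain K where K: "\<And>k. K \<le> k \<Longrightarrow>
      real (card (int_ball G d k <#> int_ball G d k)) \<le> D * real (card (int_ball G d k))"
    using doubling unfolding mult_doubling_def by blast
  define N where "N = max K L"
  define B where "B = int_ball G d N"
  have "real (card B) * (\<epsilon> * measure M (maximal_level_set L \<epsilon> f))
      \<le> real (card (B <#> B)) * (C * (\<integral>x. \<bar>f x\<bar> \<partial>M))"
    using integrated_maximal_bound[OF f less_imp_le[OF \<epsilon>]] by (simp add: B_def N_def)
  also have "\<dots> \<le> D * real (card B) * (C * (\<integral>x. \<bar>f x\<bar> \<partial>M))"
    using K[of N] besicovitch_nonneg by (intro mult_right_mono) (simp_all add: B_def N_def)
  finally have "real (card B) * (\<epsilon> * measure M (maximal_level_set L \<epsilon> f))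
      \<le> real (card B) * (C * D * (\<integral>x. \<bar>f x\<bar> \<partial>M))"
    by (simp add: ac_simps)
  moreover have "0 < card B"
    using finite_int_ball one_in_int_ball by (auto simp: B_def card_gt_0_iff)
  ultimately show ?thesis
    using \<epsilon> by (simp add: field_simps)
qed

end

theorem theorem7:
  fixes G :: "('g, 'b) monoid_scheme" and d :: "'g \<Rightarrow> 'g \<Rightarrow> real"
    and M :: "'x measure" and T :: "'g \<Rightarrow> 'x \<Rightarrow> 'x"
    and C D \<epsilon> :: real and f :: "'x \<Rightarrow> real"
  assumes "group G" and "countable (carrier G)"
    and "right_invariant_metric G d"
    and "\<And>k. finite (int_ball G d k)"
    and "besicovitch G d C"
    and "mult_doubling G d D"
    and "prob_space M"
    and "nonsingular_action G M T"
    and "integrable M f" and "\<epsilon> > 0"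
  shows "measure M {x \<in> space M.
            (SUP k\<in>{1..}. ereal \<bar>(\<Sum>g\<in>int_ball G d k. hat_op G M T g f x)
                              / (\<Sum>g\<in>int_ball G d k. hat_op G M T g (\<lambda>_. 1) x)\<bar>) > ereal \<epsilon>}
         \<le> C * D / \<epsilon> * (\<integral>x. \<bar>f x\<bar> \<partial>M)"
proof -
  interpret maximal_inequality_setting G d M T C D
    using assms by (simp add: maximal_inequality_setting_def right_invariant_metric_group_def
        nonsingular_prob_action_def maximal_inequality_setting_axioms_def)
  interpret prob_space M by fact
  let ?A = "\<lambda>L. maximal_level_set L \<epsilon> f"
  have "{x \<in> space M. (SUP k\<in>{1..}. ereal \<bar>ball_average G d M T k f x\<bar>) > ereal \<epsilon>} = (\<Union>L. ?A L)"
    by (auto simp: maximal_level_set_def less_SUP_iff intro: atLeastAtMost_iff[THEN iffD2])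
  moreover have "(\<lambda>L. measure M (?A L)) \<longlonglongrightarrow> measure M (\<Union>L. ?A L)"
    using assms(9) by (intro finite_Lim_measure_incseq) (auto simp: incseq_def maximal_level_set_def)
  ultimately show ?thesis
    unfolding ball_average_def[symmetric]
    using measure_maximal_level_set_le[OF assms(9,10)] by (auto intro: LIMSEQ_le_const2)
qed

end
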